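(* Let $S$ be a finite, additively commutative, congruence-simple semiring. If the multiplication table of $S$ has two identical rows (i.e. there exist $r_1\ne r_2$ in $S$ with $r_1z=r_2z$ for all $z\in S$), or two identical columns (i.e. there exist $r_1\ne r_2$ with $zr_1=zr_2$ for all $z\in S$), then one of the following holds: (1) there exists $c\in S$ such that $xy=c$ for all $x,y\in S$; (2) $|S|=2$.
   Context: A semiring is a nonempty set $S$ with two associative binary operations $+$ and $\cdot$ satisfying both distributive laws $a(b+c)=ab+ac$ and $(a+b)c=ac+bc$; no identity elements are assumed. It is additively commutative if $(S,+)$ is commutative. A congruence relation on $S$ is an equivalence relation $\sim$ such that $x_1\sim x_2$ implies $c+x_1\sim c+x_2$, $x_1+c\sim x_2+c$, $cx_1\sim cx_2$, $x_1c\sim x_2c$ for all $c\in S$. $S$ is congruence-simple if its only congruence relations are the identity relation and $S\times S$. *)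

theory Defs
  imports Main
begin

definition semiring_on :: "'a set \<Rightarrow> ('a \<Rightarrow> 'a \<Rightarrow> 'a) \<Rightarrow> ('a \<Rightarrow> 'a \<Rightarrow> 'a) \<Rightarrow> bool" where
  "semiring_on S add mul \<longleftrightarrow> S \<noteq> {} \<and>
     (\<forall>a\<in>S. \<forall>b\<in>S. add a b \<in> S \<and> mul a b \<in> S) \<and>
     (\<forall>a\<in>S. \<forall>b\<in>S. \<forall>c\<in>S. add (add a b) c = add a (add b c)) \<and>
     (\<forall>a\<in>S. \<forall>b\<in>S. \<forall>c\<in>S. mul (mul a b) c = mul a (mul b c)) \<and>
     (\<forall>a\<in>S. \<forall>b\<in>S. \<forall>c\<in>S. mul a (add b c) = add (mul a b) (mul a c)) \<and>
     (\<forall>a\<in>S. \<forall>b\<in>S. \<forall>c\<in>S. mul (add a b) c = add (mul a c) (mul b c))"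

definition add_comm_on :: "'a set \<Rightarrow> ('a \<Rightarrow> 'a \<Rightarrow> 'a) \<Rightarrow> bool" where
  "add_comm_on S add \<longleftrightarrow> (\<forall>a\<in>S. \<forall>b\<in>S. add a b = add b a)"

definition semiring_congruence :: "'a set \<Rightarrow> ('a \<Rightarrow> 'a \<Rightarrow> 'a) \<Rightarrow> ('a \<Rightarrow> 'a \<Rightarrow> 'a) \<Rightarrow> 'a rel \<Rightarrow> bool" where
  "semiring_congruence S add mul R \<longleftrightarrow> equiv S R \<and>
     (\<forall>x1 x2 c. (x1, x2) \<in> R \<and> c \<in> S \<longrightarrow>
        (add c x1, add c x2) \<in> R \<and> (add x1 c, add x2 c) \<in> R \<and>
        (mul c x1, mul c x2) \<in> R \<and> (mul x1 c, mul x2 c) \<in> R)"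

definition congruence_simple :: "'a set \<Rightarrow> ('a \<Rightarrow> 'a \<Rightarrow> 'a) \<Rightarrow> ('a \<Rightarrow> 'a \<Rightarrow> 'a) \<Rightarrow> bool" where
  "congruence_simple S add mul \<longleftrightarrow>
     (\<forall>R. semiring_congruence S add mul R \<longrightarrow> R = Id_on S \<or> R = S \<times> S)"

end

theory Submission
  imports Defs "HOL-Library.FuncSet"
begin

text \<open>A congruence-simple semiring has no proper nontrivial kernels: any map
\<open>h\<close> on \<open>S\<close> whose kernel is compatible with the operations is injective or constant.
Equality of rows is such a kernel; since two distinct rows agree it is all of \<open>S \<times> S\<close>,
so \<open>x z = f z\<close> for one idempotent additive map \<open>f\<close>. The kernel of \<open>f\<close> is again a
congruence: if \<open>f\<close> is constant the multiplication is constant, and if \<open>f\<close> is injective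
then \<open>f = id\<close>, i.e. \<open>x y = y\<close>. Then addition is idempotent, \<open>(S, +)\<close> is a semilattice,
and for each \<open>a\<close> the partition of \<open>S\<close> into \<open>{u. u + a = a}\<close> and its complement is a
congruence with at most two classes; simplicity forces \<open>|S| \<le> 2\<close>. Columns reduce to
rows in the opposite semiring.\<close>

lemma semiring_on_opposite:
  "semiring_on S add (\<lambda>a b. mul b a) \<longleftrightarrow> semiring_on S add mul"
  unfolding semiring_on_def by auto

lemma semiring_congruence_opposite:
  "semiring_congruence S add (\<lambda>a b. mul b a) R \<longleftrightarrow> semiring_congruence S add mul R"
  unfolding semiring_congruence_def by blast

lemma congruence_simple_opposite:
  "congruence_simple S add (\<lambda>a b. mul b a) \<longleftrightarrow> congruence_simple S add mul"
  by (simp add: congruence_simple_def semiring_congruence_opposite[of S add mul])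

lemma semilattice_below_add_iff:
  assumes assoc: "\<And>a b c. a \<in> S \<Longrightarrow> b \<in> S \<Longrightarrow> c \<in> S \<Longrightarrow> add (add a b) c = add a (add b c)"
    and comm: "\<And>a b. a \<in> S \<Longrightarrow> b \<in> S \<Longrightarrow> add a b = add b a"
    and idem: "\<And>a. a \<in> S \<Longrightarrow> add a a = a"
    and closed: "\<And>a b. a \<in> S \<Longrightarrow> b \<in> S \<Longrightarrow> add a b \<in> S"
    and S: "u \<in> S" "c \<in> S" "a \<in> S"
  shows "add (add u c) a = a \<longleftrightarrow> add u a = a \<and> add c a = a"
proof
  assume below: "add (add u c) a = a"
  have absorb: "add v (add u c) = add u c" if "v = u \<or> v = c" for v
  proof -
    have "add u (add u c) = add (add u u) c" using S closed assoc by metis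
    moreover have "add c (add u c) = add u (add c c)" using S closed assoc comm by metis
    ultimately show ?thesis using that S idem by auto
  qed
  have "add v a = a" if "v = u \<or> v = c" for v
  proof -
    have "add v a = add (add v (add u c)) a" using that S below closed assoc by metis
    then show ?thesis using absorb[OF that] below by simp
  qed
  then show "add u a = a \<and> add c a = a" by simp
next
  assume "add u a = a \<and> add c a = a"
  then show "add (add u c) a = a" using S assoc by metis
qed

locale simple_semiring_on =
  fixes S :: "'a set" and add mul :: "'a \<Rightarrow> 'a \<Rightarrow> 'a"
  assumes semiring: "semiring_on S add mul"
    and add_comm: "add_comm_on S add"
    and simple: "congruence_simple S add mul"
begin

lemma nonempty: "S \<noteq> {}"
  and add_closed: "a \<in> S \<Longrightarrow> b \<in> S \<Longrightarrow> add a b \<in> S"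
  and mul_closed: "a \<in> S \<Longrightarrow> b \<in> S \<Longrightarrow> mul a b \<in> S"
  and add_assoc: "a \<in> S \<Longrightarrow> b \<in> S \<Longrightarrow> c \<in> S \<Longrightarrow> add (add a b) c = add a (add b c)"
  and mul_assoc: "a \<in> S \<Longrightarrow> b \<in> S \<Longrightarrow> c \<in> S \<Longrightarrow> mul (mul a b) c = mul a (mul b c)"
  and distrib_left: "a \<in> S \<Longrightarrow> b \<in> S \<Longrightarrow> c \<in> S \<Longrightarrow> mul a (add b c) = add (mul a b) (mul a c)"
  and distrib_right: "a \<in> S \<Longrightarrow> b \<in> S \<Longrightarrow> c \<in> S \<Longrightarrow> mul (add a b) c = add (mul a c) (mul b c)"
  using semiring unfolding semiring_on_def by auto

lemma add_commute: "a \<in> S \<Longrightarrow> b \<in> S \<Longrightarrow> add a b = add b a"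
  using add_comm unfolding add_comm_on_def by auto

lemma kernel_inj_or_const:
  assumes compat: "\<And>x y c. x \<in> S \<Longrightarrow> y \<in> S \<Longrightarrow> c \<in> S \<Longrightarrow> h x = h y \<Longrightarrow>
      h (add c x) = h (add c y) \<and> h (mul c x) = h (mul c y) \<and> h (mul x c) = h (mul y c)"
  shows "inj_on h S \<or> (\<forall>x\<in>S. \<forall>y\<in>S. h x = h y)"
proof -
  define K where "K = {(x, y). x \<in> S \<and> y \<in> S \<and> h x = h y}"
  have "semiring_congruence S add mul K"
    unfolding semiring_congruence_def
  proof (intro conjI allI impI)
    show "equiv S K" unfolding K_def equiv_def refl_on_def sym_def trans_def by auto
  next
    fix x y c assume "(x, y) \<in> K \<and> c \<in> S"
    then have S: "x \<in> S" "y \<in> S" "c \<in> S" and eq: "h x = h y" unfolding K_def by auto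
    note hom = compat[OF S eq]
    show "(add c x, add c y) \<in> K" "(mul c x, mul c y) \<in> K" "(mul x c, mul y c) \<in> K"
      using S hom unfolding K_def by (auto intro: add_closed mul_closed)
    show "(add x c, add y c) \<in> K"
      using S hom unfolding K_def by (auto simp: add_commute intro: add_closed)
  qed
  then have "K = Id_on S \<or> K = S \<times> S"
    using simple unfolding congruence_simple_def by blast
  then show ?thesis unfolding K_def inj_on_def by auto
qed

lemma equal_rows_imp_all_rows_equal:
  assumes r: "r1 \<in> S" "r2 \<in> S" "r1 \<noteq> r2" "\<forall>z\<in>S. mul r1 z = mul r2 z"
    and S: "x \<in> S" "y \<in> S" "z \<in> S"
  shows "mul x z = mul y z"
proof -
  define row where "row x = (\<lambda>z\<in>S. mul x z)" for x
  have row_eq_iff: "row x = row y \<longleftrightarrow> (\<forall>z\<in>S. mul x z = mul y z)" for x y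
    by (auto simp: row_def fun_eq_iff)
  have "inj_on row S \<or> (\<forall>x\<in>S. \<forall>y\<in>S. row x = row y)"
  proof (rule kernel_inj_or_const)
    fix x y c assume xyc: "x \<in> S" "y \<in> S" "c \<in> S" and "row x = row y"
    then have eq: "mul x z = mul y z" if "z \<in> S" for z using that by (simp add: row_eq_iff)
    have "mul (add c x) z = mul (add c y) z" if "z \<in> S" for z
      using xyc that eq by (simp add: distrib_right)
    moreover have "mul (mul c x) z = mul (mul c y) z" if "z \<in> S" for z
      using xyc that eq by (simp add: mul_assoc)
    moreover have "mul (mul x c) z = mul (mul y c) z" if "z \<in> S" for z
      using xyc that eq mul_closed by (simp add: mul_assoc)
    ultimately show "row (add c x) = row (add c y) \<and> row (mul c x) = row (mul c y) \<and>
        row (mul x c) = row (mul y c)"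
      by (simp add: row_eq_iff)
  qed
  moreover have "\<not> inj_on row S"
    using r by (auto simp: inj_on_def row_eq_iff)
  ultimately have "row x = row y" using S by blast
  then show ?thesis using S by (simp add: row_eq_iff)
qed

lemma all_rows_equal_imp_const_or_right_zero:
  assumes rows: "\<And>x y z. x \<in> S \<Longrightarrow> y \<in> S \<Longrightarrow> z \<in> S \<Longrightarrow> mul x z = mul y z"
  shows "(\<exists>c\<in>S. \<forall>x\<in>S. \<forall>y\<in>S. mul x y = c) \<or> (\<forall>x\<in>S. \<forall>y\<in>S. mul x y = y)"
proof -
  obtain r where r: "r \<in> S" using nonempty by blast
  define f where "f = mul r"
  have mul_eq_f: "mul x z = f z" if "x \<in> S" "z \<in> S" for x z
    using rows that r unfolding f_def by blast
  have f_add: "f (add x y) = add (f x) (f y)" if "x \<in> S" "y \<in> S" for x y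
    using r that unfolding f_def by (rule distrib_left)
  have f_mul: "f (mul x y) = f y" if "x \<in> S" "y \<in> S" for x y
  proof -
    have "f (mul x y) = mul (mul r x) y" using that r unfolding f_def by (simp add: mul_assoc)
    also have "\<dots> = mul r y" using that r by (intro rows mul_closed)
    finally show ?thesis unfolding f_def .
  qed
  have f_idem: "f (f z) = f z" if "z \<in> S" for z
    using f_mul[OF r that] unfolding f_def .
  have "inj_on f S \<or> (\<forall>x\<in>S. \<forall>y\<in>S. f x = f y)"
    by (rule kernel_inj_or_const) (simp add: f_add f_mul)
  then show ?thesis
  proof
    assume "inj_on f S"
    then have "f z = z" if "z \<in> S" for z
      using that f_idem r mul_closed unfolding inj_on_def f_def by blast
    then show ?thesis using mul_eq_f by simp
  next
    assume const: "\<forall>x\<in>S. \<forall>y\<in>S. f x = f y"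
    have "\<forall>x\<in>S. \<forall>y\<in>S. mul x y = f r" using r const mul_eq_f by metis
    moreover have "f r \<in> S" using r mul_closed unfolding f_def by blast
    ultimately show ?thesis by blast
  qed
qed

lemma right_zero_imp_card_le_2:
  assumes right_zero: "\<forall>x\<in>S. \<forall>y\<in>S. mul x y = y"
  shows "finite S \<and> card S \<le> 2"
proof -
  have idem: "add a a = a" if "a \<in> S" for a
  proof -
    have "add a a = add (mul a a) (mul a a)" using that right_zero by simp
    also have "\<dots> = mul (add a a) a" using that by (simp add: distrib_right)
    also have "\<dots> = a" using that right_zero add_closed by simp
    finally show ?thesis .
  qed
  note below_iff = semilattice_below_add_iff[OF add_assoc add_commute idem add_closed]
  have below: "inj_on (\<lambda>u. add u a = a) S \<or> (\<forall>u\<in>S. add u a = a)" if a: "a \<in> S" for a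
  proof -
    have "inj_on (\<lambda>u. add u a = a) S \<or> (\<forall>u\<in>S. \<forall>v\<in>S. (add u a = a) = (add v a = a))"
      by (rule kernel_inj_or_const) (use a right_zero mul_closed in \<open>simp add: below_iff\<close>)
    then show ?thesis using a idem by blast
  qed
  show ?thesis
  proof (cases "\<exists>a\<in>S. inj_on (\<lambda>u. add u a = a) S")
    case True
    then obtain a where "inj_on (\<lambda>u. add u a = a) S" by blast
    then show ?thesis
      using card_inj_on_le[of "\<lambda>u. add u a = a" S UNIV] inj_on_finite[of "\<lambda>u. add u a = a" S UNIV]
      by auto
  next
    case False
    obtain x where x: "x \<in> S" using nonempty by blast
    have "y = x" if y: "y \<in> S" for y
    proof -
      have "add y x = x" "add x y = y" using False below x y by blast+
      then show ?thesis using add_commute[OF x y] by simp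
    qed
    then have "S = {x}" using x by blast
    then show ?thesis by simp
  qed
qed

lemma equal_rows_imp_const_or_card_2:
  assumes r: "r1 \<in> S" "r2 \<in> S" "r1 \<noteq> r2" "\<forall>z\<in>S. mul r1 z = mul r2 z"
  shows "(\<exists>c\<in>S. \<forall>x\<in>S. \<forall>y\<in>S. mul x y = c) \<or> card S = 2"
proof -
  note const_or_right_zero =
    all_rows_equal_imp_const_or_right_zero[OF equal_rows_imp_all_rows_equal[OF r]]
  show ?thesis
  proof (cases "\<forall>x\<in>S. \<forall>y\<in>S. mul x y = y")
    case True
    then have "finite S" "card S \<le> 2" using right_zero_imp_card_le_2 by auto
    moreover have "card {r1, r2} \<le> card S" using r \<open>finite S\<close> by (intro card_mono) auto
    ultimately show ?thesis using r by simp
  next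
    case False
    then show ?thesis using const_or_right_zero by blast
  qed
qed

end

theorem lemma2p1:
  fixes S :: "'a set" and add mul :: "'a \<Rightarrow> 'a \<Rightarrow> 'a"
  assumes "semiring_on S add mul"
    and "finite S"
    and "add_comm_on S add"
    and "congruence_simple S add mul"
    and "(\<exists>r1\<in>S. \<exists>r2\<in>S. r1 \<noteq> r2 \<and> (\<forall>z\<in>S. mul r1 z = mul r2 z))
       \<or> (\<exists>r1\<in>S. \<exists>r2\<in>S. r1 \<noteq> r2 \<and> (\<forall>z\<in>S. mul z r1 = mul z r2))"
  shows "(\<exists>c\<in>S. \<forall>x\<in>S. \<forall>y\<in>S. mul x y = c) \<or> card S = 2"
proof -
  interpret simple_semiring_on S add mul
    using assms(1,3,4) by unfold_locales
  interpret opposite: simple_semiring_on S add "\<lambda>a b. mul b a"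
    using assms(1,3,4) by unfold_locales
      (simp_all add: semiring_on_opposite[of S add mul] congruence_simple_opposite[of S add mul])
  from assms(5) show ?thesis
  proof (elim disjE bexE conjE)
    fix r1 r2 assume "r1 \<in> S" "r2 \<in> S" "r1 \<noteq> r2" "\<forall>z\<in>S. mul r1 z = mul r2 z"
    then show ?thesis by (rule equal_rows_imp_const_or_card_2)
  next
    fix r1 r2 assume "r1 \<in> S" "r2 \<in> S" "r1 \<noteq> r2" "\<forall>z\<in>S. mul z r1 = mul z r2"
    then have "(\<exists>c\<in>S. \<forall>x\<in>S. \<forall>y\<in>S. mul y x = c) \<or> card S = 2"
      by (rule opposite.equal_rows_imp_const_or_card_2)
    then show ?thesis by blast
  qed
qed

end
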